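(* Let $q\ge2$ and $d\ge2$ be integers and, for $\beta\ge0$, $B\in\mathbb R$, $r\in\mathbb R$, let $$f(r;\beta,B)=B+(d-1)\log\Big(\frac{e^{\beta+r}+q-1}{e^r+e^\beta+q-2}\Big).$$ There exists $\beta_-\in(0,\infty]$ (with $\beta_-=\infty$ if $d=2$ and $\beta_-<\infty$ if $d>2$) such that: for $0\le\beta\le\beta_-$ the map $r\mapsto f(r;\beta,B)$ has exactly one fixed point for every $B\in\mathbb R$; and for $\beta>\beta_-$ there exist real numbers $B_-(\beta)<B_+(\beta)$, depending smoothly on $\beta$, such that $f(\cdot;\beta,B)$ has exactly one fixed point if $B\notin[B_-(\beta),B_+(\beta)]$, exactly two if $B\in\{B_-(\beta),B_+(\beta)\}$, and exactly three if $B\in(B_-(\beta),B_+(\beta))$. When $\beta_-<\infty$, $B_\pm$ extend continuously to $\beta_-$ with $B_-(\beta_-)=B_+(\beta_-)$.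
   Context: No additional definitions are needed beyond the formula for $f$. *)

theory Defs
  imports "HOL-Analysis.Analysis"
begin

definition potts_f :: "nat \<Rightarrow> nat \<Rightarrow> real \<Rightarrow> real \<Rightarrow> real \<Rightarrow> real" where
  "potts_f q d \<beta> B r =
     B + (real d - 1) * ln ((exp (\<beta> + r) + real q - 1) / (exp r + exp \<beta> + real q - 2))"

definition fixed_points :: "nat \<Rightarrow> nat \<Rightarrow> real \<Rightarrow> real \<Rightarrow> real set" where
  "fixed_points q d \<beta> B = {r. potts_f q d \<beta> B r = r}"

text \<open>Smooth (C-infinity) on a set S: every iterated derivative is differentiable at every point of S
  (intended for open S).\<close>
definition smooth_on :: "real set \<Rightarrow> (real \<Rightarrow> real) \<Rightarrow> bool" where
  "smooth_on S g \<longleftrightarrow> (\<forall>k. \<forall>x\<in>S. ((deriv ^^ k) g) differentiable (at x))"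

end

theory Submission
  imports Defs "HOL-Library.Quadratic_Discriminant"
begin

text \<open>
  Put t = exp beta and x = exp r. The fixed points of the Potts map are the
  solutions r of field_of r = B, where field_of r = r - (d - 1) ln ((t x + q - 1) / (x + t + q - 2))
  stays within bounded distance of the identity. Its derivative is a positive multiple of the
  quadratic t x^2 + C x + (q - 1)(t + q - 2) with C = d (q - 1) - (d - 2) u and u = t (t + q - 2),
  whose discriminant factors as (u - (q - 1)) ((d - 2)^2 u - (q - 1) d^2).

  If the discriminant is nonpositive, field_of is strictly increasing and every B has one
  fixed point. If it is positive (and C < 0) the quadratic has two positive roots, field_of
  increases, decreases, increases, and B has 1, 2 or 3 preimages according to its position
  relative to the local minimum B_- = field_lo and local maximum B_+ = field_hi of field_of.
  Since u is increasing in beta with u(0) = q - 1, for beta \<ge> 0 the first case is exactly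
  beta \<le> beta_-, where u(beta_-) is the critical weight (q - 1) d^2 / (d - 2)^2
  (beta_- = infinity when d = 2). B_-, B_+ are built from exp, ln and sqrt, hence smooth above
  beta_-, and they merge continuously at beta_-.
\<close>

section \<open>Elementary functions are smooth\<close>

text \<open>On an open S the class is closed under
  differentiation, hence all its members are smooth there.\<close>
inductive_set elementary :: "real set \<Rightarrow> (real \<Rightarrow> real) set" for S :: "real set" where
  const: "(\<lambda>x. c) \<in> elementary S"
| ident: "(\<lambda>x. x) \<in> elementary S"
| add: "f \<in> elementary S \<Longrightarrow> g \<in> elementary S \<Longrightarrow> (\<lambda>x. f x + g x) \<in> elementary S"
| mult: "f \<in> elementary S \<Longrightarrow> g \<in> elementary S \<Longrightarrow> (\<lambda>x. f x * g x) \<in> elementary S"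
| exp: "f \<in> elementary S \<Longrightarrow> (\<lambda>x. exp (f x)) \<in> elementary S"
| ln: "f \<in> elementary S \<Longrightarrow> (\<forall>x\<in>S. f x > 0) \<Longrightarrow> (\<lambda>x. ln (f x)) \<in> elementary S"
| cong: "f \<in> elementary S \<Longrightarrow> (\<forall>x\<in>S. g x = f x) \<Longrightarrow> g \<in> elementary S"

text \<open>The closure rules proper (the congruence rule is kept out of automation, where it
  would loop).\<close>
lemmas elementary_rules =
  elementary.const elementary.ident elementary.add elementary.mult elementary.exp elementary.ln

lemma elementary_diff:
  "f \<in> elementary S \<Longrightarrow> g \<in> elementary S \<Longrightarrow> (\<lambda>x. f x - g x) \<in> elementary S"
  using elementary.add[OF _ elementary.mult[OF elementary.const[of "-1"]], of f S g] by simp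

lemma elementary_uminus: "f \<in> elementary S \<Longrightarrow> (\<lambda>x. - f x) \<in> elementary S"
  using elementary_diff[OF elementary.const, of f S 0] by simp

text \<open>For positive arguments, inversion and square root reduce to exp and ln.\<close>
lemma elementary_inverse:
  assumes "f \<in> elementary S" "\<forall>x\<in>S. f x > 0"
  shows "(\<lambda>x. inverse (f x)) \<in> elementary S"
proof (rule elementary.cong)
  show "(\<lambda>x. exp (- 1 * ln (f x))) \<in> elementary S"
    using assms by (intro elementary_rules)
  show "\<forall>x\<in>S. inverse (f x) = exp (- 1 * ln (f x))"
    using assms by (simp add: exp_minus)
qed

lemma elementary_divide:
  "f \<in> elementary S \<Longrightarrow> g \<in> elementary S \<Longrightarrow> \<forall>x\<in>S. g x > 0 \<Longrightarrow> (\<lambda>x. f x / g x) \<in> elementary S"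
  unfolding divide_inverse by (intro elementary.mult elementary_inverse)

lemma elementary_sqrt:
  assumes "f \<in> elementary S" "\<forall>x\<in>S. f x > 0"
  shows "(\<lambda>x. sqrt (f x)) \<in> elementary S"
proof (rule elementary.cong)
  show "(\<lambda>x. exp (1/2 * ln (f x))) \<in> elementary S"
    using assms by (intro elementary_rules)
  show "\<forall>x\<in>S. sqrt (f x) = exp (1/2 * ln (f x))"
    using assms by (auto simp: powr_half_sqrt[symmetric] powr_def)
qed

lemma elementary_has_derivative:
  assumes "open S" "f \<in> elementary S"
  shows "\<exists>f'\<in>elementary S. \<forall>x\<in>S. (f has_real_derivative f' x) (at x)"
  using assms(2)
proof induction
  case (const c)
  show ?case by (rule bexI[of _ "\<lambda>x. 0"]) (auto intro: elementary.const)
next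
  case ident
  show ?case by (rule bexI[of _ "\<lambda>x. 1"]) (auto intro: elementary.const)
next
  case (add f g)
  then obtain f' g' where "f' \<in> elementary S" "g' \<in> elementary S"
    "\<forall>x\<in>S. (f has_real_derivative f' x) (at x)" "\<forall>x\<in>S. (g has_real_derivative g' x) (at x)"
    by blast
  then show ?case
    by (intro bexI[of _ "\<lambda>x. f' x + g' x"] ballI elementary.add) (auto intro!: derivative_eq_intros)
next
  case (mult f g)
  then obtain f' g' where "f' \<in> elementary S" "g' \<in> elementary S"
    "\<forall>x\<in>S. (f has_real_derivative f' x) (at x)" "\<forall>x\<in>S. (g has_real_derivative g' x) (at x)"
    by blast
  with mult.hyps show ?case
    by (intro bexI[of _ "\<lambda>x. f' x * g x + f x * g' x"] ballI elementary.add elementary.mult)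
      (auto intro!: derivative_eq_intros)
next
  case (exp f)
  then obtain f' where "f' \<in> elementary S" "\<forall>x\<in>S. (f has_real_derivative f' x) (at x)"
    by blast
  with exp.hyps show ?case
    by (intro bexI[of _ "\<lambda>x. f' x * exp (f x)"] ballI elementary.mult elementary.exp)
      (auto intro!: derivative_eq_intros)
next
  case (ln f)
  then obtain f' where "f' \<in> elementary S" "\<forall>x\<in>S. (f has_real_derivative f' x) (at x)"
    by blast
  with ln.hyps show ?case
    by (intro bexI[of _ "\<lambda>x. f' x * inverse (f x)"] ballI elementary.mult elementary_inverse)
      (auto intro!: derivative_eq_intros simp: divide_inverse)
next
  case (cong f g)
  then obtain f' where "f' \<in> elementary S" "\<forall>x\<in>S. (f has_real_derivative f' x) (at x)"
    by blast
  with cong.hyps(2) \<open>open S\<close> show ?case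
    by (metis has_field_derivative_transform_within_open)
qed

text \<open>Every member of the class is smooth on the open set S: each iterated derivative
  agrees on S with a member of the class, which is differentiable there.\<close>
lemma elementary_smooth_on:
  assumes "open S" "f \<in> elementary S"
  shows "smooth_on S f"
proof -
  have iterated: "(deriv ^^ k) f \<in> elementary S" for k
  proof (induction k)
    case 0
    show ?case using assms(2) by simp
  next
    case (Suc k)
    obtain g' where g': "g' \<in> elementary S"
      and der: "\<forall>x\<in>S. ((deriv ^^ k) f has_real_derivative g' x) (at x)"
      using elementary_has_derivative[OF assms(1) Suc.IH] by blast
    have "\<forall>x\<in>S. (deriv ^^ Suc k) f x = g' x"
      using der by (simp add: DERIV_imp_deriv)
    with g' show ?case by (rule elementary.cong)
  qed
  have "((deriv ^^ k) f) differentiable (at x)" if "x \<in> S" for k x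
    using elementary_has_derivative[OF assms(1) iterated, of k] that
    unfolding real_differentiable_def by blast
  then show ?thesis unfolding smooth_on_def by blast
qed

section \<open>Counting level sets of piecewise monotone functions\<close>

lemma level_set_inj_on:
  assumes "inj_on h I"
  shows "finite {r\<in>I. h r = B}" "card {r\<in>I. h r = B} = of_bool (B \<in> h ` I)"
proof (atomize (full), cases "B \<in> h ` I")
  case True
  then obtain s where "s \<in> I" "h s = B" by blast
  with assms have "{r\<in>I. h r = B} = {s}" by (auto dest: inj_onD)
  with True show "finite {r\<in>I. h r = B} \<and> card {r\<in>I. h r = B} = of_bool (B \<in> h ` I)"
    by simp
next
  case False
  then have "{r\<in>I. h r = B} = {}" by blast
  with False show "finite {r\<in>I. h r = B} \<and> card {r\<in>I. h r = B} = of_bool (B \<in> h ` I)"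
    by (simp only: finite.emptyI card.empty of_bool_eq(1) simp_thms)
qed

lemma strict_mono_on_if_deriv_pos:
  fixes h h' :: "real \<Rightarrow> real"
  assumes der: "\<And>x. (h has_real_derivative h' x) (at x)"
    and pos: "\<And>u v x. u \<in> I \<Longrightarrow> v \<in> I \<Longrightarrow> u < x \<Longrightarrow> x < v \<Longrightarrow> h' x > 0"
  shows "strict_mono_on I h"
proof (rule strict_mono_onI)
  fix u v assume uv: "u \<in> I" "v \<in> I" "u < v"
  have "\<exists>y. (h has_real_derivative y) (at x) \<and> y > 0" if "u < x" "x < v" for x
    using der pos[OF uv(1,2) that] by blast
  moreover have "continuous_on {u..v} h"
    using der by (meson DERIV_isCont continuous_at_imp_continuous_on)
  ultimately show "h u < h v"
    using DERIV_pos_imp_increasing_open[OF uv(3)] by blast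
qed

lemma strict_antimono_on_if_deriv_neg:
  fixes h h' :: "real \<Rightarrow> real"
  assumes der: "\<And>x. (h has_real_derivative h' x) (at x)"
    and neg: "\<And>u v x. u \<in> I \<Longrightarrow> v \<in> I \<Longrightarrow> u < x \<Longrightarrow> x < v \<Longrightarrow> h' x < 0"
  shows "strict_antimono_on I h"
proof (rule monotone_onI)
  fix u v assume uv: "u \<in> I" "v \<in> I" "u < v"
  have "\<exists>y. (h has_real_derivative y) (at x) \<and> y < 0" if "u < x" "x < v" for x
    using der neg[OF uv(1,2) that] by blast
  moreover have "continuous_on {u..v} h"
    using der by (meson DERIV_isCont continuous_at_imp_continuous_on)
  ultimately show "h v < h u"
    using DERIV_neg_imp_decreasing_open[OF uv(3)] by blast
qed

text \<open>A nonnegative derivative vanishing at most once still forces strict increase: split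
  an interval at the zero, if it contains one.\<close>
lemma strict_mono_if_deriv_nonneg_single_zero:
  fixes h h' :: "real \<Rightarrow> real"
  assumes der: "\<And>x. (h has_real_derivative h' x) (at x)"
    and nonneg: "\<And>x. h' x \<ge> 0"
    and single_zero: "\<And>x y. h' x = 0 \<Longrightarrow> h' y = 0 \<Longrightarrow> x = y"
  shows "strict_mono h"
proof (rule strict_monoI)
  have incr: "h u < h v" if "u < v" "\<And>x. u < x \<Longrightarrow> x < v \<Longrightarrow> h' x \<noteq> 0" for u v
  proof -
    have "strict_mono_on {u..v} h"
      using that(2) nonneg by (intro strict_mono_on_if_deriv_pos[OF der]) (simp add: order_neq_le_trans)
    then show ?thesis using \<open>u < v\<close> by (simp add: monotone_on_def)
  qed
  fix a b :: real assume "a < b"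
  show "h a < h b"
  proof (cases "\<exists>c. a < c \<and> c < b \<and> h' c = 0")
    case True
    then obtain c where c: "a < c" "c < b" "h' c = 0" by blast
    have nonzero: "h' x \<noteq> 0" if "x \<noteq> c" for x
      using single_zero c(3) that by blast
    have "h a < h c" "h c < h b"
      using c nonzero by (intro incr; fastforce)+
    then show ?thesis by simp
  next
    case False
    then show ?thesis using incr[OF \<open>a < b\<close>] by blast
  qed
qed

lemma card_level_set_strict_mono:
  fixes h :: "real \<Rightarrow> real"
  assumes mono: "strict_mono h" and cont: "\<And>x. isCont h x"
    and bot: "filterlim h at_bot at_bot" and top: "filterlim h at_top at_top"
  shows "card {r. h r = B} = 1"
proof -
  obtain z where "h z \<le> B"
    using bot unfolding filterlim_at_bot eventually_at_bot_linorder by blast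
  moreover obtain w where "B \<le> h w"
    using top unfolding filterlim_at_top eventually_at_top_linorder by blast
  ultimately have "z \<le> w"
    using mono by (metis order.trans not_le strict_mono_less_eq)
  have "B \<in> range h"
    using IVT[OF \<open>h z \<le> B\<close> \<open>B \<le> h w\<close> \<open>z \<le> w\<close>] cont by blast
  then show ?thesis
    using level_set_inj_on(2)[OF strict_mono_imp_inj_on[OF mono], where I = UNIV and B = B] by simp
qed

lemma mono_on_image_atMost:
  fixes h :: "real \<Rightarrow> real"
  assumes mono: "mono_on {..a} h" and cont: "\<And>x. isCont h x"
    and bot: "filterlim h at_bot at_bot"
  shows "h ` {..a} = {..h a}"
proof
  show "h ` {..a} \<subseteq> {..h a}"
    using mono by (auto intro: mono_onD)
  show "{..h a} \<subseteq> h ` {..a}"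
  proof
    fix y assume y: "y \<in> {..h a}"
    obtain N where N: "\<forall>x\<le>N. h x \<le> y"
      using bot unfolding filterlim_at_bot eventually_at_bot_linorder by blast
    have "\<exists>x. min N a \<le> x \<and> x \<le> a \<and> h x = y"
      using N y cont by (intro IVT) auto
    then show "y \<in> h ` {..a}" by force
  qed
qed

lemma mono_on_image_atLeast:
  fixes h :: "real \<Rightarrow> real"
  assumes mono: "mono_on {a..} h" and cont: "\<And>x. isCont h x"
    and top: "filterlim h at_top at_top"
  shows "h ` {a..} = {h a..}"
proof
  show "h ` {a..} \<subseteq> {h a..}"
    using mono by (auto intro: mono_onD)
  show "{h a..} \<subseteq> h ` {a..}"
  proof
    fix y assume y: "y \<in> {h a..}"
    obtain N where N: "\<forall>x\<ge>N. y \<le> h x"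
      using top unfolding filterlim_at_top eventually_at_top_linorder by blast
    have "\<exists>x. a \<le> x \<and> x \<le> max N a \<and> h x = y"
      using N y cont by (intro IVT) auto
    then show "y \<in> h ` {a..}" by force
  qed
qed

lemma strict_antimono_on_image_open_interval:
  fixes h :: "real \<Rightarrow> real"
  assumes anti: "strict_antimono_on {a..b} h" and cont: "\<And>x. isCont h x" and "a \<le> b"
  shows "h ` {a<..<b} = {h b<..<h a}"
proof
  show "h ` {a<..<b} \<subseteq> {h b<..<h a}"
  proof
    fix y assume "y \<in> h ` {a<..<b}"
    then obtain x where x: "a < x" "x < b" "y = h x" by auto
    then have "h x < h a" "h b < h x"
      using monotone_onD[OF anti, where x = a and y = x] monotone_onD[OF anti, where x = x and y = b]
      by auto
    then show "y \<in> {h b<..<h a}" using x by simp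
  qed
  show "{h b<..<h a} \<subseteq> h ` {a<..<b}"
  proof
    fix y assume y: "y \<in> {h b<..<h a}"
    then obtain x where "a \<le> x" "x \<le> b" "h x = y"
      using IVT2[of h b y a] cont \<open>a \<le> b\<close> by auto
    moreover have "x \<noteq> a" "x \<noteq> b" using y \<open>h x = y\<close> by auto
    ultimately show "y \<in> h ` {a<..<b}" by force
  qed
qed

lemma level_set_up_down_up:
  fixes h h' :: "real \<Rightarrow> real"
  assumes der: "\<And>x. (h has_real_derivative h' x) (at x)"
    and bot: "filterlim h at_bot at_bot" and top: "filterlim h at_top at_top"
    and "r1 < r2"
    and up1: "\<And>x. x < r1 \<Longrightarrow> h' x > 0"
    and down: "\<And>x. r1 < x \<Longrightarrow> x < r2 \<Longrightarrow> h' x < 0"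
    and up2: "\<And>x. r2 < x \<Longrightarrow> h' x > 0"
  shows "h r2 < h r1"
    and "card {r. h r = B} = of_bool (B \<le> h r1) + of_bool (h r2 < B \<and> B < h r1) + of_bool (h r2 \<le> B)"
proof -
  have cont: "\<And>x. isCont h x" using der DERIV_isCont by blast
  have mono1: "strict_mono_on {..r1} h"
    using up1 by (intro strict_mono_on_if_deriv_pos[OF der]) auto
  have anti: "strict_antimono_on {r1..r2} h"
    using down by (intro strict_antimono_on_if_deriv_neg[OF der]) auto
  have mono2: "strict_mono_on {r2..} h"
    using up2 by (intro strict_mono_on_if_deriv_pos[OF der]) auto
  show "h r2 < h r1"
    using monotone_onD[OF anti, where x = r1 and y = r2] \<open>r1 < r2\<close> by simp
  have img1: "h ` {..r1} = {..h r1}"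
    by (rule mono_on_image_atMost[OF strict_mono_on_imp_mono_on[OF mono1] cont bot])
  have img2: "h ` {r1<..<r2} = {h r2<..<h r1}"
    using \<open>r1 < r2\<close> by (intro strict_antimono_on_image_open_interval[OF anti cont]) simp
  have img3: "h ` {r2..} = {h r2..}"
    by (rule mono_on_image_atLeast[OF strict_mono_on_imp_mono_on[OF mono2] cont top])
  have inj2: "inj_on h {r1<..<r2}"
    using anti unfolding strict_antimono_iff_antimono
    by (meson greaterThanLessThan_subseteq_atLeastAtMost_iff inj_on_subset order_refl)
  define level where "level I = {r\<in>I. h r = B}" for I
  note piece1 = level_set_inj_on[OF strict_mono_on_imp_inj_on[OF mono1], where B = B,
      folded level_def]
  note piece2 = level_set_inj_on[OF inj2, where B = B, folded level_def]
  note piece3 = level_set_inj_on[OF strict_mono_on_imp_inj_on[OF mono2], where B = B,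
      folded level_def]
  have split: "{r. h r = B} = level {..r1} \<union> level {r1<..<r2} \<union> level {r2..}"
    unfolding level_def by auto
  have "card (level {..r1} \<union> level {r1<..<r2}) = card (level {..r1}) + card (level {r1<..<r2})"
    using piece1(1) piece2(1) by (intro card_Un_disjoint) (auto simp: level_def)
  moreover have "card (level {..r1} \<union> level {r1<..<r2} \<union> level {r2..})
      = card (level {..r1} \<union> level {r1<..<r2}) + card (level {r2..})"
    using piece1(1) piece2(1) piece3(1) \<open>r1 < r2\<close>
    by (intro card_Un_disjoint) (auto simp: level_def)
  ultimately show "card {r. h r = B} =
      of_bool (B \<le> h r1) + of_bool (h r2 < B \<and> B < h r1) + of_bool (h r2 \<le> B)"
    unfolding split piece1(2) piece2(2) piece3(2) img1 img2 img3 by simp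
qed

lemma mediant_bounds:
  fixes a b c e x :: real
  assumes "c > 0" "e > 0" "x \<ge> 0"
  shows "min (a / c) (b / e) * (c * x + e) \<le> a * x + b"
    and "a * x + b \<le> max (a / c) (b / e) * (c * x + e)"
proof -
  have "min (a / c) (b / e) * c \<le> a" "min (a / c) (b / e) * e \<le> b"
    using assms by (simp_all flip: pos_le_divide_eq)
  with assms(3) show "min (a / c) (b / e) * (c * x + e) \<le> a * x + b"
    by (smt (verit, best) distrib_left mult.assoc mult.commute mult_right_mono)
  have "a \<le> max (a / c) (b / e) * c" "b \<le> max (a / c) (b / e) * e"
    using assms by (simp_all flip: pos_divide_le_eq)
  with assms(3) show "a * x + b \<le> max (a / c) (b / e) * (c * x + e)"
    by (smt (verit, best) distrib_left mult.assoc mult.commute mult_right_mono)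
qed

lemma filterlim_near_identity:
  fixes h :: "real \<Rightarrow> real"
  assumes "\<forall>r. \<bar>h r - r\<bar> \<le> K"
  shows "filterlim h at_top at_top" "filterlim h at_bot at_bot"
proof -
  have "\<forall>x\<ge>Z + K. Z \<le> h x" "\<forall>x\<le>Z - K. h x \<le> Z" for Z
    using assms by (smt (verit))+
  then show "filterlim h at_top at_top" "filterlim h at_bot at_bot"
    unfolding filterlim_at_top filterlim_at_bot eventually_at_top_linorder eventually_at_bot_linorder
    by blast+
qed

section \<open>Roots of real quadratics\<close>

text \<open>The two roots of a real quadratic with nonnegative discriminant, smaller one first
  when the leading coefficient is positive.\<close>
definition root_lo :: "real \<Rightarrow> real \<Rightarrow> real \<Rightarrow> real" where
  "root_lo a b c = (- b - sqrt (discrim a b c)) / (2 * a)"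

definition root_hi :: "real \<Rightarrow> real \<Rightarrow> real \<Rightarrow> real" where
  "root_hi a b c = (- b + sqrt (discrim a b c)) / (2 * a)"

lemma quadratic_factor:
  assumes "a \<noteq> 0" "discrim a b c \<ge> 0"
  shows "a * x\<^sup>2 + b * x + c = a * (x - root_lo a b c) * (x - root_hi a b c)"
proof -
  define s where "s = sqrt (discrim a b c)"
  have s2: "s\<^sup>2 = b\<^sup>2 - 4 * a * c"
    using assms(2) by (simp add: s_def discrim_def)
  have "a * (x - root_lo a b c) * (x - root_hi a b c) = a * x\<^sup>2 + b * x + (b\<^sup>2 - s\<^sup>2) / (4 * a)"
    unfolding root_lo_def root_hi_def s_def[symmetric] using assms(1)
    by (simp add: field_simps power2_eq_square)
  also have "\<dots> = a * x\<^sup>2 + b * x + c"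
    using assms(1) by (simp add: s2)
  finally show ?thesis ..
qed

lemma quadratic_nonneg:
  assumes "a > 0" "discrim a b c \<le> 0"
  shows "a * x\<^sup>2 + b * x + c \<ge> 0"
proof -
  have "4 * a * (a * x\<^sup>2 + b * x + c) = (2 * a * x + b)\<^sup>2 - discrim a b c"
    by (simp add: discrim_def algebra_simps power2_eq_square)
  also have "\<dots> \<ge> 0" using assms(2) zero_le_power2[of "2 * a * x + b"] by linarith
  finally show ?thesis using assms(1) by (simp add: zero_le_mult_iff)
qed

lemma quadratic_single_root:
  assumes "a \<noteq> 0" "discrim a b c \<le> 0"
    and "a * x\<^sup>2 + b * x + c = 0" "a * y\<^sup>2 + b * y + c = 0"
  shows "x = y"
proof (cases "discrim a b c = 0")
  case True
  then show ?thesis using assms(1,3,4) by (simp add: discriminant_zero)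
next
  case False
  then show ?thesis using assms discriminant_negative by force
qed

lemma quadratic_roots_pos:
  assumes "a > 0" "b < 0" "c > 0" "discrim a b c > 0"
  shows "0 < root_lo a b c" "root_lo a b c < root_hi a b c"
proof -
  have "discrim a b c < b\<^sup>2"
    using assms by (simp add: discrim_def)
  then have "sqrt (discrim a b c) < - b"
    using assms(2) real_sqrt_less_iff[of _ "b\<^sup>2"] by simp
  then show "0 < root_lo a b c"
    unfolding root_lo_def using assms(1) by simp
  show "root_lo a b c < root_hi a b c"
    unfolding root_lo_def root_hi_def using assms by (simp add: divide_strict_right_mono)
qed

section \<open>The fixed-point equation of the Potts map\<close>

text \<open>Writing t = exp beta and x = exp r, the fixed-point equation of the Potts map reads
  field_of r = B: field_of r is the external field for which r is a fixed point.\<close>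
definition field_of :: "nat \<Rightarrow> nat \<Rightarrow> real \<Rightarrow> real \<Rightarrow> real" where
  "field_of q d \<beta> r =
     r - (real d - 1) * (ln (exp \<beta> * exp r + real q - 1) - ln (exp r + exp \<beta> + real q - 2))"

lemma potts_terms_pos:
  assumes "q \<ge> 2" "x > 0"
  shows "exp \<beta> * x + real q - 1 > 0" "x + exp \<beta> + real q - 2 > 0"
proof -
  have "exp \<beta> * x > 0" "exp \<beta> > 0" "real q \<ge> 2" using assms by simp_all
  then show "exp \<beta> * x + real q - 1 > 0" "x + exp \<beta> + real q - 2 > 0"
    using assms(2) by linarith+
qed

lemma fixed_points_eq_level_set:
  assumes "q \<ge> 2"
  shows "fixed_points q d \<beta> B = {r. field_of q d \<beta> r = B}"
proof -
  have "ln ((exp (\<beta> + r) + real q - 1) / (exp r + exp \<beta> + real q - 2))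
      = ln (exp \<beta> * exp r + real q - 1) - ln (exp r + exp \<beta> + real q - 2)" for r
    using potts_terms_pos[OF assms, where x = "exp r" and \<beta> = \<beta>] by (simp add: exp_add ln_div)
  then show ?thesis
    unfolding fixed_points_def potts_f_def field_of_def by auto
qed

text \<open>The derivative of field_of is a quadratic in x = exp r divided by a positive
  quantity. Its coefficients depend on beta through t = exp beta and the weight t(t + q - 2).\<close>
definition weight :: "nat \<Rightarrow> real \<Rightarrow> real" where
  "weight q \<beta> = exp \<beta> * (exp \<beta> + real q - 2)"

definition lin_coeff :: "nat \<Rightarrow> nat \<Rightarrow> real \<Rightarrow> real" where
  "lin_coeff q d \<beta> = real d * (real q - 1) - (real d - 2) * weight q \<beta>"

definition const_coeff :: "nat \<Rightarrow> real \<Rightarrow> real" where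
  "const_coeff q \<beta> = (real q - 1) * (exp \<beta> + real q - 2)"

abbreviation crit_poly :: "nat \<Rightarrow> nat \<Rightarrow> real \<Rightarrow> real \<Rightarrow> real" where
  "crit_poly q d \<beta> x \<equiv> exp \<beta> * x\<^sup>2 + lin_coeff q d \<beta> * x + const_coeff q \<beta>"

abbreviation crit_disc :: "nat \<Rightarrow> nat \<Rightarrow> real \<Rightarrow> real" where
  "crit_disc q d \<beta> \<equiv> discrim (exp \<beta>) (lin_coeff q d \<beta>) (const_coeff q \<beta>)"

lemma field_of_has_derivative:
  assumes "q \<ge> 2"
  shows "(field_of q d \<beta> has_real_derivative
     crit_poly q d \<beta> (exp r) / ((exp \<beta> * exp r + real q - 1) * (exp r + exp \<beta> + real q - 2))) (at r)"
proof -
  define t x where "t = exp \<beta>" and "x = exp r"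
  define N D where "N = t * x + real q - 1" and "D = x + t + real q - 2"
  have N: "N > 0" and D: "D > 0"
    using potts_terms_pos[OF assms, of x \<beta>] by (simp_all add: N_def D_def t_def x_def)
  have "(field_of q d \<beta> has_real_derivative 1 - (real d - 1) * (t * x / N - x / D)) (at r)"
    unfolding field_of_def[abs_def] using N D
    by (auto intro!: derivative_eq_intros simp: N_def D_def t_def x_def)
  moreover have "1 - (real d - 1) * (t * x / N - x / D) = crit_poly q d \<beta> x / (N * D)"
  proof -
    have "N * D - (real d - 1) * (t * x * D - x * N) = crit_poly q d \<beta> x"
      unfolding N_def D_def lin_coeff_def const_coeff_def weight_def t_def
      by (simp add: algebra_simps power2_eq_square)
    then show ?thesis using N D by (simp add: field_simps)
  qed
  ultimately show ?thesis by (simp add: N_def D_def t_def x_def)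
qed

text \<open>By the mediant inequality, field_of stays within bounded distance of the identity.\<close>
lemma field_of_near_identity:
  assumes "q \<ge> 2"
  shows "\<exists>K. \<forall>r. \<bar>field_of q d \<beta> r - r\<bar> \<le> K"
proof -
  define t where "t = exp \<beta>"
  define m M where "m = min t ((real q - 1) / (t + real q - 2))"
    and "M = max t ((real q - 1) / (t + real q - 2))"
  have "t > 0" "real q \<ge> 2" using assms by (simp_all add: t_def)
  then have e: "t + real q - 2 > 0" and q1: "real q - 1 > 0" by linarith+
  have "m > 0" "M > 0"
    using e q1 \<open>t > 0\<close> by (simp_all add: m_def M_def less_max_iff_disj)
  have "\<bar>field_of q d \<beta> r - r\<bar> \<le> \<bar>real d - 1\<bar> * (\<bar>ln m\<bar> + \<bar>ln M\<bar>)" for r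
  proof -
    define x N D where "x = exp r" and "N = t * x + real q - 1" and "D = x + t + real q - 2"
    have "D > 0" using e exp_gt_zero[of r] unfolding D_def x_def by linarith
    have "m * D \<le> N" "N \<le> M * D"
      using mediant_bounds[of 1 "t + real q - 2" x t "real q - 1"] e
      unfolding m_def M_def N_def D_def x_def by (simp_all add: algebra_simps)
    moreover have "m * D > 0" "M * D > 0"
      using \<open>m > 0\<close> \<open>M > 0\<close> \<open>D > 0\<close> by simp_all
    ultimately have "ln (m * D) \<le> ln N" "ln N \<le> ln (M * D)"
      by (simp_all del: ln_mult)
    then have "ln m + ln D \<le> ln N" "ln N \<le> ln M + ln D"
      using \<open>m > 0\<close> \<open>M > 0\<close> \<open>D > 0\<close> by (simp_all add: ln_mult)
    then have "\<bar>ln N - ln D\<bar> \<le> \<bar>ln m\<bar> + \<bar>ln M\<bar>" by linarith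
    moreover have "\<bar>field_of q d \<beta> r - r\<bar> = \<bar>real d - 1\<bar> * \<bar>ln N - ln D\<bar>"
      unfolding field_of_def N_def D_def x_def t_def by (simp add: abs_mult)
    ultimately show ?thesis
      by (simp add: mult_left_mono)
  qed
  then show ?thesis by blast
qed

lemma field_of_tends_to_infinity:
  assumes "q \<ge> 2"
  shows "filterlim (field_of q d \<beta>) at_top at_top" "filterlim (field_of q d \<beta>) at_bot at_bot"
  using field_of_near_identity[OF assms] filterlim_near_identity by blast+

lemma field_of_deriv_pos_multiple:
  assumes "q \<ge> 2"
  obtains w where "\<And>r. w r > 0"
    and "\<And>r. (field_of q d \<beta> has_real_derivative crit_poly q d \<beta> (exp r) / w r) (at r)"
proof
  show "(exp \<beta> * exp r + real q - 1) * (exp r + exp \<beta> + real q - 2) > 0" for r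
    using potts_terms_pos[OF assms, where x = "exp r" and \<beta> = \<beta>] by simp
qed (rule field_of_has_derivative[OF assms])

text \<open>Nonpositive discriminant: field_of is strictly increasing, so every field B has exactly
  one fixed point.\<close>
lemma unique_fixed_point:
  assumes "q \<ge> 2" and disc: "crit_disc q d \<beta> \<le> 0"
  shows "card (fixed_points q d \<beta> B) = 1"
proof -
  obtain w where w: "\<And>r. w r > 0"
    and der: "\<And>r. (field_of q d \<beta> has_real_derivative crit_poly q d \<beta> (exp r) / w r) (at r)"
    using field_of_deriv_pos_multiple[OF assms(1)] by blast
  have "crit_poly q d \<beta> (exp r) / w r \<ge> 0" for r
    using quadratic_nonneg[OF exp_gt_zero disc, of "exp r"] w[of r] by simp
  moreover have "r = s" if "crit_poly q d \<beta> (exp r) / w r = 0" "crit_poly q d \<beta> (exp s) / w s = 0" for r s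
    using quadratic_single_root[OF exp_not_eq_zero disc, of "exp r" "exp s"] w[of r] w[of s] that
    by simp
  ultimately have "strict_mono (field_of q d \<beta>)"
    by (intro strict_mono_if_deriv_nonneg_single_zero[OF der])
  then show ?thesis
    unfolding fixed_points_eq_level_set[OF assms(1)]
    using field_of_tends_to_infinity[OF assms(1)] der DERIV_isCont
    by (intro card_level_set_strict_mono) blast+
qed

text \<open>The two spinodal fields: the values of field_of at its local minimum ln of the larger
  root and at its local maximum ln of the smaller root of the critical quadratic.\<close>
definition field_lo :: "nat \<Rightarrow> nat \<Rightarrow> real \<Rightarrow> real" where
  "field_lo q d \<beta> = field_of q d \<beta> (ln (root_hi (exp \<beta>) (lin_coeff q d \<beta>) (const_coeff q \<beta>)))"

definition field_hi :: "nat \<Rightarrow> nat \<Rightarrow> real \<Rightarrow> real" where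
  "field_hi q d \<beta> = field_of q d \<beta> (ln (root_lo (exp \<beta>) (lin_coeff q d \<beta>) (const_coeff q \<beta>)))"

lemma const_coeff_pos:
  assumes "q \<ge> 2" shows "const_coeff q \<beta> > 0"
proof -
  have "exp \<beta> > 0" "real q \<ge> 2" using assms by simp_all
  then show ?thesis unfolding const_coeff_def by (intro mult_pos_pos) linarith+
qed

lemma fixed_points_three_regime:
  assumes "q \<ge> 2" and disc: "crit_disc q d \<beta> > 0" and lin: "lin_coeff q d \<beta> < 0"
  shows "field_lo q d \<beta> < field_hi q d \<beta>"
    and "card (fixed_points q d \<beta> B) = of_bool (B \<le> field_hi q d \<beta>)
      + of_bool (field_lo q d \<beta> < B \<and> B < field_hi q d \<beta>) + of_bool (field_lo q d \<beta> \<le> B)"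
proof -
  define x1 x2 where "x1 = root_lo (exp \<beta>) (lin_coeff q d \<beta>) (const_coeff q \<beta>)"
    and "x2 = root_hi (exp \<beta>) (lin_coeff q d \<beta>) (const_coeff q \<beta>)"
  have roots: "0 < x1" "x1 < x2"
    using quadratic_roots_pos[OF exp_gt_zero lin const_coeff_pos[OF assms(1)] disc]
    unfolding x1_def x2_def by simp_all
  have factor: "crit_poly q d \<beta> x = exp \<beta> * ((x - x1) * (x - x2))" for x
    using quadratic_factor[OF exp_not_eq_zero less_imp_le[OF disc]] unfolding x1_def x2_def
    by (simp add: mult.assoc)
  obtain w where w: "\<And>r. w r > 0"
    and der: "\<And>r. (field_of q d \<beta> has_real_derivative crit_poly q d \<beta> (exp r) / w r) (at r)"
    using field_of_deriv_pos_multiple[OF assms(1)] by blast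
  have sign: "crit_poly q d \<beta> (exp r) / w r > 0 \<longleftrightarrow> (exp r - x1) * (exp r - x2) > 0"
    "crit_poly q d \<beta> (exp r) / w r < 0 \<longleftrightarrow> (exp r - x1) * (exp r - x2) < 0" for r
    using w[of r] unfolding factor by (simp_all add: zero_less_divide_iff divide_less_0_iff
      zero_less_mult_iff mult_less_0_iff)
  have exp_x1: "exp (ln x1) = x1" and exp_x2: "exp (ln x2) = x2" using roots by simp_all
  have lt: "ln x1 < ln x2" using roots by simp
  have up1: "crit_poly q d \<beta> (exp r) / w r > 0" if "r < ln x1" for r
    using exp_less_cancel_iff[of r "ln x1"] that roots unfolding sign exp_x1
    by (intro mult_neg_neg) auto
  have down: "crit_poly q d \<beta> (exp r) / w r < 0" if "ln x1 < r" "r < ln x2" for r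
    using exp_less_cancel_iff[of "ln x1" r] exp_less_cancel_iff[of r "ln x2"] that
    unfolding sign exp_x1 exp_x2 by (intro mult_pos_neg) auto
  have up2: "crit_poly q d \<beta> (exp r) / w r > 0" if "ln x2 < r" for r
    using exp_less_cancel_iff[of "ln x2" r] that roots unfolding sign exp_x2
    by (intro mult_pos_pos) auto
  note shape = level_set_up_down_up[OF der field_of_tends_to_infinity(2,1)[OF assms(1)] lt up1 down up2]
  show "field_lo q d \<beta> < field_hi q d \<beta>"
    unfolding field_lo_def field_hi_def x1_def[symmetric] x2_def[symmetric] by (rule shape(1))
  show "card (fixed_points q d \<beta> B) = of_bool (B \<le> field_hi q d \<beta>)
      + of_bool (field_lo q d \<beta> < B \<and> B < field_hi q d \<beta>) + of_bool (field_lo q d \<beta> \<le> B)"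
    unfolding field_lo_def field_hi_def x1_def[symmetric] x2_def[symmetric]
      fixed_points_eq_level_set[OF assms(1)] by (rule shape(2))
qed

section \<open>The critical inverse temperature\<close>

lemma crit_disc_factor:
  "crit_disc q d \<beta> = (weight q \<beta> - (real q - 1)) *
     ((real d - 2)\<^sup>2 * weight q \<beta> - (real q - 1) * (real d)\<^sup>2)"
  unfolding discrim_def lin_coeff_def const_coeff_def weight_def
  by (simp add: algebra_simps power2_eq_square)

lemma weight_strict_mono:
  assumes "q \<ge> 2"
  shows "strict_mono (weight q)"
proof (rule strict_monoI)
  fix s t :: real assume "s < t"
  then have "exp s < exp t" by simp
  moreover have "real q \<ge> 2" "exp s > 0" using assms by simp_all
  ultimately show "weight q s < weight q t"
    unfolding weight_def by (intro mult_strict_mono) linarith+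
qed

lemma weight_zero: "weight q 0 = real q - 1"
  unfolding weight_def by simp

text \<open>The critical weight (q - 1) d^2 / (d - 2)^2: the discriminant changes sign there.\<close>
definition crit_weight :: "nat \<Rightarrow> nat \<Rightarrow> real" where
  "crit_weight q d = (real q - 1) * (real d)\<^sup>2 / (real d - 2)\<^sup>2"

lemma crit_weight_props:
  assumes "q \<ge> 2" "d > 2"
  shows "(real d - 2)\<^sup>2 * crit_weight q d = (real q - 1) * (real d)\<^sup>2"
    and "crit_weight q d > real q - 1"
    and "(real d - 2) * crit_weight q d > real d * (real q - 1)"
proof -
  have d: "real d - 2 > 0" and q: "real q - 1 > 0" using assms by simp_all
  show eq: "(real d - 2)\<^sup>2 * crit_weight q d = (real q - 1) * (real d)\<^sup>2"
    unfolding crit_weight_def using d by simp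
  have "(real d - 2)\<^sup>2 * (real q - 1) < (real d - 2)\<^sup>2 * crit_weight q d"
    unfolding eq using d q by (simp add: power_strict_mono)
  then show "crit_weight q d > real q - 1" using d by simp
  have "(real d - 2) * (real d * (real q - 1)) < real d * real d * (real q - 1)"
    using d q assms(2) by (simp add: algebra_simps)
  also have "\<dots> = (real d - 2) * ((real d - 2) * crit_weight q d)"
    using eq by (simp add: power2_eq_square algebra_simps)
  finally show "(real d - 2) * crit_weight q d > real d * (real q - 1)"
    using d by simp
qed

lemma crit_disc_nonpos:
  assumes "q \<ge> 2" "d \<ge> 2" "\<beta> \<ge> 0"
    and "d = 2 \<or> weight q \<beta> \<le> crit_weight q d"
  shows "crit_disc q d \<beta> \<le> 0"
proof -
  have "weight q \<beta> - (real q - 1) \<ge> 0"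
    using strict_mono_less_eq[OF weight_strict_mono[OF assms(1)]] assms(3) weight_zero[of q]
    by (metis diff_ge_0_iff_ge)
  moreover have "(real d - 2)\<^sup>2 * weight q \<beta> - (real q - 1) * (real d)\<^sup>2 \<le> 0"
  proof (cases "d = 2")
    case True
    then show ?thesis using assms(1) by simp
  next
    case False
    then have "d > 2" "weight q \<beta> \<le> crit_weight q d" using assms(2,4) by auto
    then show ?thesis
      using crit_weight_props(1)[OF assms(1) \<open>d > 2\<close>] mult_left_mono[of _ _ "(real d - 2)\<^sup>2"]
      by fastforce
  qed
  ultimately show ?thesis
    unfolding crit_disc_factor by (simp add: mult_nonneg_nonpos)
qed

lemma crit_disc_pos:
  assumes "q \<ge> 2" "d > 2" and above: "weight q \<beta> > crit_weight q d"
  shows "crit_disc q d \<beta> > 0" "lin_coeff q d \<beta> < 0"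
proof -
  note K = crit_weight_props[OF assms(1,2)]
  have d: "(real d - 2)\<^sup>2 > 0" "real d - 2 > 0" using assms(2) by auto
  have "weight q \<beta> - (real q - 1) > 0" using above K(2) by simp
  moreover have "(real d - 2)\<^sup>2 * weight q \<beta> > (real q - 1) * (real d)\<^sup>2"
    using mult_strict_left_mono[OF above d(1)] K(1) by simp
  ultimately show "crit_disc q d \<beta> > 0"
    unfolding crit_disc_factor by simp
  have "(real d - 2) * weight q \<beta> > (real d - 2) * crit_weight q d"
    using above d(2) by simp
  then show "lin_coeff q d \<beta> < 0"
    using K(3) unfolding lin_coeff_def by simp
qed

text \<open>The critical inverse temperature: the weight, increasing from q - 1 at beta = 0 to
  infinity, crosses the critical weight at some positive beta.\<close>
lemma critical_beta_exists:
  assumes "q \<ge> 2" "d > 2"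
  shows "\<exists>b>0. weight q b = crit_weight q d"
proof -
  define K where "K = crit_weight q d"
  have K: "K > real q - 1" "real q - 1 \<ge> 1"
    using crit_weight_props(2)[OF assms] assms(1) by (simp_all add: K_def)
  have "weight q 0 \<le> K" using K by (simp add: weight_zero)
  moreover have "K \<le> weight q (ln K)"
  proof -
    have "K > 1" "real q \<ge> 2" using K assms(1) by simp_all
    then have "K * 1 \<le> K * (K + real q - 2)" by (intro mult_left_mono) linarith+
    then show ?thesis using \<open>K > 1\<close> by (simp add: weight_def)
  qed
  moreover have "0 \<le> ln K" using K by simp
  moreover have "isCont (weight q) x" for x
    unfolding weight_def[abs_def] by (intro continuous_intros)
  ultimately obtain b where "0 \<le> b" "weight q b = K"
    using IVT[of "weight q" 0 K "ln K"] by blast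
  moreover have "b \<noteq> 0" using \<open>weight q b = K\<close> K(1) weight_zero[of q] by auto
  ultimately show ?thesis unfolding K_def by (intro exI[of _ b]) simp
qed

lemma crit_disc_at_critical:
  assumes "q \<ge> 2" "d > 2" and crit: "weight q \<beta> = crit_weight q d"
  shows "crit_disc q d \<beta> = 0" "lin_coeff q d \<beta> < 0"
proof -
  note K = crit_weight_props[OF assms(1,2)]
  show "crit_disc q d \<beta> = 0" unfolding crit_disc_factor crit K(1) by simp
  show "lin_coeff q d \<beta> < 0" unfolding lin_coeff_def crit using K(3) by simp
qed

lemma unique_fixed_point_subcritical:
  assumes "q \<ge> 2" "d \<ge> 2" "\<beta> \<ge> 0"
    and "d = 2 \<or> weight q \<beta> \<le> crit_weight q d"
  shows "card (fixed_points q d \<beta> B) = 1"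
  using unique_fixed_point[OF assms(1) crit_disc_nonpos[OF assms]] .

lemma fixed_point_counts_supercritical:
  assumes "q \<ge> 2" "d > 2" and above: "weight q \<beta> > crit_weight q d"
  shows "field_lo q d \<beta> < field_hi q d \<beta> \<and>
    (\<forall>B. (B < field_lo q d \<beta> \<or> field_hi q d \<beta> < B) \<longrightarrow> card (fixed_points q d \<beta> B) = 1) \<and>
    (\<forall>B. (B = field_lo q d \<beta> \<or> B = field_hi q d \<beta>) \<longrightarrow> card (fixed_points q d \<beta> B) = 2) \<and>
    (\<forall>B. field_lo q d \<beta> < B \<and> B < field_hi q d \<beta> \<longrightarrow> card (fixed_points q d \<beta> B) = 3)"
proof -
  note regime = fixed_points_three_regime[OF assms(1) crit_disc_pos[OF assms]]
  show ?thesis using regime(1) unfolding regime(2) by auto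
qed

section \<open>Regularity of the spinodal fields\<close>

lemma field_of_elementary:
  assumes "q \<ge> 2" "g \<in> elementary S"
  shows "(\<lambda>\<beta>. field_of q d \<beta> (g \<beta>)) \<in> elementary S"
proof -
  have pos: "\<forall>\<beta>\<in>S. exp \<beta> * exp (g \<beta>) + real q - 1 > 0"
    "\<forall>\<beta>\<in>S. exp (g \<beta>) + exp \<beta> + real q - 2 > 0"
    using potts_terms_pos[OF assms(1)] by simp_all
  show ?thesis
    unfolding field_of_def
    by (intro elementary_diff elementary_rules assms(2) pos)
qed

lemma crit_roots_elementary:
  assumes "\<forall>\<beta>\<in>S. crit_disc q d \<beta> > 0"
  shows "(\<lambda>\<beta>. root_lo (exp \<beta>) (lin_coeff q d \<beta>) (const_coeff q \<beta>)) \<in> elementary S"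
    and "(\<lambda>\<beta>. root_hi (exp \<beta>) (lin_coeff q d \<beta>) (const_coeff q \<beta>)) \<in> elementary S"
proof -
  have lin: "(\<lambda>\<beta>. lin_coeff q d \<beta>) \<in> elementary S"
    unfolding lin_coeff_def weight_def by (intro elementary_diff elementary_rules)
  have disc: "(\<lambda>\<beta>. sqrt (crit_disc q d \<beta>)) \<in> elementary S"
    unfolding discrim_def power2_eq_square const_coeff_def
    by (intro elementary_sqrt elementary_diff elementary_rules lin)
      (use assms in \<open>simp add: discrim_def power2_eq_square const_coeff_def\<close>)
  have denom: "(\<lambda>\<beta>. 2 * exp \<beta>) \<in> elementary S" "\<forall>\<beta>\<in>S. 2 * exp \<beta> > 0"
    by (intro elementary_rules) simp
  show "(\<lambda>\<beta>. root_lo (exp \<beta>) (lin_coeff q d \<beta>) (const_coeff q \<beta>)) \<in> elementary S"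
    unfolding root_lo_def by (intro elementary_divide elementary_diff elementary_uminus lin disc denom)
  show "(\<lambda>\<beta>. root_hi (exp \<beta>) (lin_coeff q d \<beta>) (const_coeff q \<beta>)) \<in> elementary S"
    unfolding root_hi_def by (intro elementary_divide elementary.add elementary_uminus lin disc denom)
qed

lemma spinodal_fields_smooth:
  assumes "q \<ge> 2" "open S"
    and regime: "\<forall>\<beta>\<in>S. crit_disc q d \<beta> > 0 \<and> lin_coeff q d \<beta> < 0"
  shows "smooth_on S (field_lo q d)" "smooth_on S (field_hi q d)"
proof -
  have roots: "0 < root_lo (exp \<beta>) (lin_coeff q d \<beta>) (const_coeff q \<beta>)"
    "0 < root_hi (exp \<beta>) (lin_coeff q d \<beta>) (const_coeff q \<beta>)" if "\<beta> \<in> S" for \<beta>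
    using quadratic_roots_pos[OF exp_gt_zero _ const_coeff_pos[OF assms(1)]] regime that
    by (meson less_trans)+
  have "\<forall>\<beta>\<in>S. crit_disc q d \<beta> > 0" using regime by blast
  then have hi: "(\<lambda>\<beta>. ln (root_hi (exp \<beta>) (lin_coeff q d \<beta>) (const_coeff q \<beta>))) \<in> elementary S"
    and lo: "(\<lambda>\<beta>. ln (root_lo (exp \<beta>) (lin_coeff q d \<beta>) (const_coeff q \<beta>))) \<in> elementary S"
    using crit_roots_elementary roots by (simp_all add: elementary.ln)
  show "smooth_on S (field_lo q d)"
    unfolding field_lo_def[abs_def]
    by (rule elementary_smooth_on[OF assms(2) field_of_elementary[OF assms(1) hi]])
  show "smooth_on S (field_hi q d)"
    unfolding field_hi_def[abs_def]
    by (rule elementary_smooth_on[OF assms(2) field_of_elementary[OF assms(1) lo]])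
qed

lemma field_of_isCont:
  assumes "q \<ge> 2" "isCont g x"
  shows "isCont (\<lambda>\<beta>. field_of q d \<beta> (g \<beta>)) x"
  unfolding field_of_def using assms(2) potts_terms_pos[OF assms(1), of "exp (g x)" x]
  by (intro continuous_intros) auto

text \<open>Where the discriminant vanishes (with negative linear coefficient) the two roots
  coincide and are positive, so the spinodal fields are continuous there and equal.\<close>
lemma spinodal_fields_merge:
  assumes "q \<ge> 2" and disc: "crit_disc q d b = 0" and lin: "lin_coeff q d b < 0"
  shows "isCont (field_lo q d) b" "isCont (field_hi q d) b" "field_lo q d b = field_hi q d b"
proof -
  let ?root_lo = "\<lambda>\<beta>. root_lo (exp \<beta>) (lin_coeff q d \<beta>) (const_coeff q \<beta>)"
  let ?root_hi = "\<lambda>\<beta>. root_hi (exp \<beta>) (lin_coeff q d \<beta>) (const_coeff q \<beta>)"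
  have same: "?root_lo b = ?root_hi b" and pos: "?root_lo b > 0"
    using disc lin by (simp_all add: root_lo_def root_hi_def divide_neg_pos)
  have "isCont ?root_lo b" "isCont ?root_hi b"
    unfolding root_lo_def root_hi_def discrim_def lin_coeff_def const_coeff_def weight_def
    by (intro continuous_intros; simp)+
  then have lo: "isCont (\<lambda>\<beta>. ln (?root_lo \<beta>)) b" and hi: "isCont (\<lambda>\<beta>. ln (?root_hi \<beta>)) b"
    using pos same by (intro continuous_intros; simp)+
  show "isCont (field_lo q d) b"
    unfolding field_lo_def[abs_def] by (rule field_of_isCont[OF assms(1) hi])
  show "isCont (field_hi q d) b"
    unfolding field_hi_def[abs_def] by (rule field_of_isCont[OF assms(1) lo])
  show "field_lo q d b = field_hi q d b"
    unfolding field_lo_def field_hi_def using same by simp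
qed

theorem mainTheorem18:
  fixes q d :: nat
  assumes "q \<ge> 2" and "d \<ge> 2"
  shows "\<exists>\<beta>m :: ereal. 0 < \<beta>m \<and> (\<beta>m = \<infinity> \<longleftrightarrow> d = 2) \<and>
    (\<forall>\<beta> B. 0 \<le> \<beta> \<and> ereal \<beta> \<le> \<beta>m \<longrightarrow> card (fixed_points q d \<beta> B) = 1) \<and>
    (\<exists>Bm Bp :: real \<Rightarrow> real.
       smooth_on {\<beta>. \<beta>m < ereal \<beta>} Bm \<and> smooth_on {\<beta>. \<beta>m < ereal \<beta>} Bp \<and>
       (\<forall>\<beta>. \<beta>m < ereal \<beta> \<longrightarrow>
          Bm \<beta> < Bp \<beta> \<and>
          (\<forall>B. (B < Bm \<beta> \<or> Bp \<beta> < B) \<longrightarrow> card (fixed_points q d \<beta> B) = 1) \<and>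
          (\<forall>B. (B = Bm \<beta> \<or> B = Bp \<beta>) \<longrightarrow> card (fixed_points q d \<beta> B) = 2) \<and>
          (\<forall>B. Bm \<beta> < B \<and> B < Bp \<beta> \<longrightarrow> card (fixed_points q d \<beta> B) = 3)) \<and>
       (\<forall>b. \<beta>m = ereal b \<longrightarrow>
          (\<exists>L. (Bm \<longlongrightarrow> L) (at_right b) \<and> (Bp \<longlongrightarrow> L) (at_right b))))"
proof (cases "d = 2")
  case True
  then have "card (fixed_points q d \<beta> B) = 1" if "0 \<le> \<beta>" for \<beta> B
    using unique_fixed_point_subcritical[OF assms that] by simp
  then show ?thesis
    using True by (intro exI[of _ \<infinity>]) (simp add: smooth_on_def)
next
  case False
  then have "d > 2" using assms(2) by simp
  obtain b where "b > 0" and crit: "weight q b = crit_weight q d"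
    using critical_beta_exists[OF assms(1) \<open>d > 2\<close>] by blast
  note weight_mono = weight_strict_mono[OF assms(1)]
  have below: "card (fixed_points q d \<beta> B) = 1" if "0 \<le> \<beta>" "\<beta> \<le> b" for \<beta> B
    using unique_fixed_point_subcritical[OF assms that(1)] strict_mono_less_eq[OF weight_mono] that crit
    by metis
  have above: "weight q \<beta> > crit_weight q d" if "b < \<beta>" for \<beta>
    using strict_mono_less[OF weight_mono] that crit by metis
  have "smooth_on {b<..} (field_lo q d)" "smooth_on {b<..} (field_hi q d)"
    using spinodal_fields_smooth[OF assms(1) open_greaterThan] crit_disc_pos[OF assms(1) \<open>d > 2\<close> above]
    by auto
  moreover note spinodal_fields_merge[OF assms(1) crit_disc_at_critical[OF assms(1) \<open>d > 2\<close> crit]]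
  moreover note fixed_point_counts_supercritical[OF assms(1) \<open>d > 2\<close> above]
  ultimately show ?thesis
    using \<open>b > 0\<close> below False
    by (intro exI[of _ "ereal b"] exI[of _ "field_lo q d"] exI[of _ "field_hi q d"])
      (auto simp: greaterThan_def isCont_def intro: tendsto_mono[OF at_within_le_at])
qed

end
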